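(* Let $(L,\preceq,\bot,\top)$ be a bounded lattice with at least three elements and let $K_1,K_2$ be blocks of $L$. Then either $K_1\cap K_2$ is a block of $L$, or $K_1$ and $K_2$ are independent blocks of $L$.
   Context: For $k\in L$ let ${\uparrow}k=\{x\in L\mid k\preceq x\}$ and ${\downarrow}k=\{x\in L\mid x\preceq k\}$. A block of $L$ is a sublattice $K\subsetneq L$ (a proper subset) such that $K\setminus\{\bot,\top\}\neq\varnothing$ and $({\uparrow}k\cup{\downarrow}k)\setminus\{\bot,\top\}\subseteq K$ for every $k\in K\setminus\{\bot,\top\}$. Two blocks $K_1,K_2$ are independent if $K_1\cap K_2\subseteq\{\bot,\top\}$. *)

theory Defs
  imports Main
begin

definition up_set :: "'a::order \<Rightarrow> 'a set" where
  "up_set k = {x. k \<le> x}"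

definition down_set :: "'a::order \<Rightarrow> 'a set" where
  "down_set k = {x. x \<le> k}"

definition sublattice :: "'a::lattice set \<Rightarrow> bool" where
  "sublattice K \<longleftrightarrow> K \<noteq> {} \<and> (\<forall>x\<in>K. \<forall>y\<in>K. inf x y \<in> K \<and> sup x y \<in> K)"

definition is_block :: "'a::bounded_lattice set \<Rightarrow> bool" where
  "is_block K \<longleftrightarrow> sublattice K \<and> K \<subset> UNIV \<and> K - {bot, top} \<noteq> {} \<and>
     (\<forall>k \<in> K - {bot, top}. (up_set k \<union> down_set k) - {bot, top} \<subseteq> K)"

definition independent_blocks :: "'a::bounded_lattice set \<Rightarrow> 'a set \<Rightarrow> bool" where
  "independent_blocks K1 K2 \<longleftrightarrow> is_block K1 \<and> is_block K2 \<and> K1 \<inter> K2 \<subseteq> {bot, top}"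

end

theory Submission
  imports Defs
begin

(* Both defining conditions of a block, closure under meets and joins and the up/down-set
   condition at every element other than bot and top, pass to intersections; so K1 \<inter> K2 is a
   block as soon as it contains an element other than bot and top, and otherwise the two blocks
   are independent. *)

lemma sublattice_Int:
  assumes "sublattice K1" and "sublattice K2" and "K1 \<inter> K2 \<noteq> {}"
  shows "sublattice (K1 \<inter> K2)"
  using assms unfolding sublattice_def by blast

lemma is_block_Int:
  assumes K1: "is_block K1" and K2: "is_block K2"
    and inner: "\<not> K1 \<inter> K2 \<subseteq> {bot, top}"
  shows "is_block (K1 \<inter> K2)"
proof -
  have "sublattice (K1 \<inter> K2)"
    using K1 K2 inner by (intro sublattice_Int) (auto simp: is_block_def)
  moreover have "K1 \<inter> K2 \<subset> UNIV"
    using K1 unfolding is_block_def by blast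
  moreover have "\<forall>k \<in> K1 \<inter> K2 - {bot, top}. (up_set k \<union> down_set k) - {bot, top} \<subseteq> K1 \<inter> K2"
    using K1 K2 unfolding is_block_def by blast
  ultimately show ?thesis
    using inner unfolding is_block_def by blast
qed

theorem proposition19:
  fixes K1 K2 :: "'a::bounded_lattice set"
  assumes "\<exists>x y z :: 'a. x \<noteq> y \<and> y \<noteq> z \<and> x \<noteq> z"
    and "is_block K1" and "is_block K2"
  shows "is_block (K1 \<inter> K2) \<or> independent_blocks K1 K2"
proof (cases "K1 \<inter> K2 \<subseteq> {bot, top}")
  case True
  then show ?thesis
    using assms(2,3) by (simp add: independent_blocks_def)
next
  case False
  then show ?thesis
    using assms(2,3) by (simp add: is_block_Int)
qed

end
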